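(* Let $v,a,b,c\in\mathbb{C}$ with $\Re(v)<2$, $\Re(c)>0$, and $\Re(vc+a+b)>0$, $\Re(vc+a-b)>0$, $\Re(vc-a+b)>0$, $\Re(vc-a-b)>0$. Fix a square root $\sqrt{a^2+b^2}$ and put $\lambda_1=\frac v2-\frac{\sqrt{a^2+b^2}}{2c}$, $\lambda_2=\frac v2+\frac{\sqrt{a^2+b^2}}{2c}$, $\sigma_3=\frac v2-\frac{a}{2c}-\frac{b}{2c}$, $\sigma_4=\frac v2-\frac{a}{2c}+\frac{b}{2c}$, $\sigma_5=\frac v2+\frac{a}{2c}+\frac{b}{2c}$, $\sigma_6=\frac v2+\frac{a}{2c}-\frac{b}{2c}$, and $P=(vc-a-b)(vc+a+b)(vc-a+b)(vc+a-b)$. Assume $\frac v2,\lambda_1,\lambda_2\notin\mathbb{Z}_0^-$ and $1+\sigma_j\notin\mathbb{Z}_0^-$ for $j=3,4,5,6$. Then $$ {}_8F_7\!\left(\begin{matrix}v,\ 1+\frac v2,\ 1+\lambda_1,\ 1+\lambda_2,\ \sigma_3,\ \sigma_4,\ \sigma_5,\ \sigma_6\\ \frac v2,\ \lambda_1,\ \lambda_2,\ 1+\sigma_3,\ 1+\sigma_4,\ 1+\sigma_5,\ 1+\sigma_6\end{matrix};\,-1\right) =\frac{P}{8\,(v^3c^4-a^2vc^2-b^2vc^2)\,\Gamma(v)}\Big[\Gamma(\sigma_5)\Gamma(\sigma_3)+\Gamma(\sigma_6)\Gamma(\sigma_4)\Big]. $$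
   Context: $\mathbb{Z}_0^-=\{0,-1,-2,\dots\}$. The Pochhammer symbol is $(\lambda)_0=1$, $(\lambda)_n=\lambda(\lambda+1)\cdots(\lambda+n-1)$ for $n\ge1$. The generalized hypergeometric series is ${}_pF_q\!\left(\begin{matrix}\alpha_1,\dots,\alpha_p\\ \beta_1,\dots,\beta_q\end{matrix};z\right)=\sum_{n=0}^\infty\frac{(\alpha_1)_n\cdots(\alpha_p)_n}{(\beta_1)_n\cdots(\beta_q)_n}\frac{z^n}{n!}$ (with no $\beta_j\in\mathbb{Z}_0^-$); when $p=q+1$ and $z=-1$ it converges if $\Re(\sum\beta_j-\sum\alpha_i)>-1$. $\Gamma$ is Euler's gamma function. *)

theory Defs
  imports "HOL-Analysis.Analysis"
begin

definition hyper_term :: "complex list \<Rightarrow> complex list \<Rightarrow> complex \<Rightarrow> nat \<Rightarrow> complex" where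
  "hyper_term as bs z n =
     (\<Prod>a\<leftarrow>as. pochhammer a n) / (\<Prod>b\<leftarrow>bs. pochhammer b n) * z ^ n / of_nat (fact n)"

definition hypergeometric :: "complex list \<Rightarrow> complex list \<Rightarrow> complex \<Rightarrow> complex" where
  "hypergeometric as bs z = (\<Sum>n. hyper_term as bs z n)"

end

theory Submission
  imports Defs "HOL-Complex_Analysis.Complex_Analysis"
begin

text \<open>The key identity is \<open>\<Sum>\<^sub>n (-v choose n) (1/(n+\<sigma>) + 1/(n+v-\<sigma>)) = B(\<sigma>, v-\<sigma>)\<close>.
  For real \<open>\<sigma>, \<tau> > 0\<close> with \<open>\<sigma> + \<tau> < 1\<close> the two halves of the series are
  \<open>\<integral>\<^sub>0\<^sup>1 t^(\<sigma>-1) (1+t)^(-\<sigma>-\<tau>) dt\<close> and its twin with \<open>\<sigma>\<close> and \<open>\<tau>\<close> exchanged, and the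
  substitution \<open>t = u/(1-u)\<close> turns them into the Beta integral over \<open>[0,1/2]\<close> and over \<open>[1/2,1]\<close>.
  Single terms are only \<open>O(n^(Re v - 2))\<close>, but consecutive terms nearly cancel and pairs are
  \<open>O(n^(Re v - 3))\<close>; hence the series converges locally uniformly for \<open>Re v < 2\<close>, both sides
  are holomorphic, and the identity extends by analytic continuation, first in \<open>\<sigma>\<close> and then
  in \<open>v\<close>. Finally, the term ratio of the very-well-poised \<open>8F7\<close> is a partial fraction that
  writes its \<open>n\<close>-th term as a constant times the sum of the key terms for \<open>\<sigma> = \<sigma>\<^sub>3\<close> and
  \<open>\<sigma> = \<sigma>\<^sub>4\<close>.\<close>

section \<open>The Beta series for small real parameters\<close>

lemma pochhammer_div_fact_le_powr:
  fixes \<rho> :: real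
  assumes "\<rho> > 0"
  obtains C where "C > 0" "\<And>n. n \<ge> 1 \<Longrightarrow> pochhammer \<rho> n / fact n \<le> C * real n powr (\<rho> - 1)"
proof -
  have "Bseq (rGamma_series \<rho>)"
    using rGamma_series_LIMSEQ by (rule convergent_imp_Bseq[OF convergentI])
  then obtain K where K: "K > 0" "\<And>n. norm (rGamma_series \<rho> n) \<le> K"
    by (auto elim: BseqE)
  have "pochhammer \<rho> n / fact n \<le> K * real n powr (\<rho> - 1)" if n: "n \<ge> 1" for n
  proof -
    have pos: "pochhammer \<rho> n > 0" "pochhammer \<rho> (Suc n) > 0"
      using assms by (auto intro: pochhammer_pos)
    have "rGamma_series \<rho> n = pochhammer \<rho> (Suc n) / (fact n * real n powr \<rho>)"
      using n by (simp add: rGamma_series_def powr_def)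
    with K(2)[of n] pos n have "pochhammer \<rho> (Suc n) \<le> K * (fact n * real n powr \<rho>)"
      by (simp add: divide_le_eq)
    moreover have "pochhammer \<rho> n * real n \<le> pochhammer \<rho> (Suc n)"
      using pos assms by (simp add: pochhammer_Suc mult_left_mono)
    ultimately have "pochhammer \<rho> n * real n \<le> K * fact n * real n powr \<rho>"
      by (simp add: mult_ac)
    also have "real n powr \<rho> = real n powr (\<rho> - 1) * real n"
      using n by (simp add: powr_diff)
    finally show ?thesis
      using n by (simp add: divide_le_eq mult_ac)
  qed
  with K(1) show thesis by (rule that)
qed

lemma summable_pochhammer_div_fact_div:
  fixes \<rho> \<sigma> :: real
  assumes "0 < \<rho>" "\<rho> < 1" "\<sigma> > 0"
  shows "summable (\<lambda>n. pochhammer \<rho> n / fact n / (real n + \<sigma>))"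
proof -
  obtain C where C: "C > 0" "\<And>n. n \<ge> 1 \<Longrightarrow> pochhammer \<rho> n / fact n \<le> C * real n powr (\<rho> - 1)"
    using pochhammer_div_fact_le_powr[OF assms(1)] by blast
  show ?thesis
  proof (rule summable_comparison_test_ev)
    show "summable (\<lambda>n. C * real n powr (\<rho> - 2))"
      using assms by (intro summable_mult) (simp add: summable_real_powr_iff)
    show "\<forall>\<^sub>F n in sequentially. norm (pochhammer \<rho> n / fact n / (real n + \<sigma>)) \<le> C * real n powr (\<rho> - 2)"
      using eventually_ge_at_top[of "1::nat"]
    proof eventually_elim
      case (elim n)
      have nonneg: "pochhammer \<rho> n \<ge> 0"
        using assms by (simp add: pochhammer_nonneg)
      have "norm (pochhammer \<rho> n / fact n / (real n + \<sigma>)) = pochhammer \<rho> n / fact n / (real n + \<sigma>)"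
        using nonneg assms by simp
      also have "\<dots> \<le> pochhammer \<rho> n / fact n / real n"
        using nonneg elim assms by (intro divide_left_mono) auto
      also have "\<dots> \<le> C * real n powr (\<rho> - 1) / real n"
        using C(2)[OF elim] by (intro divide_right_mono) auto
      also have "\<dots> = C * real n powr (\<rho> - 2)"
        using elim by (simp add: powr_diff power2_eq_square)
      finally show ?case .
    qed
  qed
qed

lemma continuous_on_powser_unit_interval:
  fixes b :: "nat \<Rightarrow> real"
  assumes "summable (\<lambda>n. norm (b n))"
  shows "continuous_on {0..1} (\<lambda>x. \<Sum>n. b n * x^n)"
proof -
  have "uniform_limit {0..1::real} (\<lambda>N x. \<Sum>i<N. b i * x^i) (\<lambda>x. \<Sum>i. b i * x^i) sequentially"
  proof (rule Weierstrass_m_test[OF _ assms])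
    fix n x assume "x \<in> {0..1::real}"
    then show "norm (b n * x^n) \<le> norm (b n)"
      by (simp add: abs_mult mult_left_le power_le_one)
  qed
  then show ?thesis
    by (rule uniform_limit_theorem[rotated]) (auto intro!: continuous_intros always_eventually)
qed

lemma sums_powser_times_shifted_index:
  fixes b :: "nat \<Rightarrow> real"
  assumes "summable (\<lambda>n. norm (b n))" "0 < x" "x < 1"
  shows "(\<lambda>n. (real n + \<sigma>) * b n * x^n) sums (\<sigma> * (\<Sum>n. b n * x^n) + x * (\<Sum>n. diffs b n * x^n))"
proof -
  have b1: "summable (\<lambda>n. b n * 1^n)"
    using summable_norm_cancel[OF assms(1)] by simp
  have "summable (\<lambda>n. diffs b n * x^n)"
    by (rule termdiff_converges[of x 1]) (use assms powser_inside[OF b1] in auto)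
  then have "(\<lambda>n. x * (diffs b n * x^n)) sums (x * (\<Sum>n. diffs b n * x^n))"
    by (intro sums_mult summable_sums)
  then have "(\<lambda>n. (\<lambda>m. real m * b m * x^m) (Suc n)) sums (x * (\<Sum>n. diffs b n * x^n))"
    by (simp add: diffs_def mult_ac)
  then have "(\<lambda>n. real n * b n * x^n) sums (x * (\<Sum>n. diffs b n * x^n))"
    by (subst (asm) sums_Suc_iff) simp
  moreover have "(\<lambda>n. b n * x^n) sums (\<Sum>n. b n * x^n)"
    using assms by (intro summable_sums powser_inside[OF b1]) auto
  ultimately have "(\<lambda>n. \<sigma> * (b n * x^n) + real n * b n * x^n) sums
      (\<sigma> * (\<Sum>n. b n * x^n) + x * (\<Sum>n. diffs b n * x^n))"
    by (intro sums_add sums_mult)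
  then show ?thesis
    by (simp add: algebra_simps)
qed

lemma powr_powser_antiderivative:
  fixes a :: "nat \<Rightarrow> real" and A :: "real \<Rightarrow> real"
  assumes \<sigma>: "\<sigma> > 0" and summable: "summable (\<lambda>n. \<bar>a n\<bar> / (real n + \<sigma>))"
    and sums: "\<And>x. 0 < x \<Longrightarrow> x < 1 \<Longrightarrow> (\<lambda>n. a n * x^n) sums A x"
  defines "F \<equiv> \<lambda>x. x powr \<sigma> * (\<Sum>n. a n / (real n + \<sigma>) * x^n)"
  shows "continuous_on {0..1} F"
    and "\<And>x. 0 < x \<Longrightarrow> x < 1 \<Longrightarrow> (F has_real_derivative x powr (\<sigma> - 1) * A x) (at x)"
proof -
  define b where "b n = a n / (real n + \<sigma>)" for n
  have "norm (b n) = \<bar>a n\<bar> / (real n + \<sigma>)" for n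
    using \<sigma> by (simp add: b_def abs_divide)
  then have b: "summable (\<lambda>n. norm (b n))"
    using summable by simp
  have "continuous_on {0..1::real} (\<lambda>x. x powr \<sigma>)"
    using \<sigma> by (intro continuous_on_powr') (auto intro!: continuous_intros)
  then show "continuous_on {0..1} F"
    unfolding F_def b_def[symmetric]
    by (intro continuous_on_mult continuous_on_powser_unit_interval[OF b])
  fix x :: real assume x: "0 < x" "x < 1"
  have b1: "summable (\<lambda>n. b n * 1^n)"
    using summable_norm_cancel[OF b] by simp
  have "(\<lambda>n. (real n + \<sigma>) * b n * x^n) = (\<lambda>n. a n * x^n)"
    using \<sigma> by (simp add: b_def add_pos_nonneg)
  then have key: "\<sigma> * (\<Sum>n. b n * x^n) + x * (\<Sum>n. diffs b n * x^n) = A x"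
    using sums_powser_times_shifted_index[OF b x, of \<sigma>] sums[OF x] sums_unique2 by metis
  have "((\<lambda>x. \<Sum>n. b n * x^n) has_real_derivative (\<Sum>n. diffs b n * x^n)) (at x)"
    by (rule termdiffs_strong[OF b1]) (use x in auto)
  then have "(F has_real_derivative
      \<sigma> * x powr (\<sigma> - 1) * (\<Sum>n. b n * x^n) + x powr \<sigma> * (\<Sum>n. diffs b n * x^n)) (at x)"
    unfolding F_def b_def[symmetric] using x by (auto intro!: derivative_eq_intros)
  moreover have "x powr \<sigma> = x powr (\<sigma> - 1) * x"
    using x by (simp add: powr_diff)
  ultimately show "(F has_real_derivative x powr (\<sigma> - 1) * A x) (at x)"
    by (simp add: key[symmetric] algebra_simps)
qed

text \<open>The integrals \<open>\<integral>\<^sub>0\<^sup>u t^(\<sigma>-1) (1-t)^(\<tau>-1) dt\<close> and \<open>\<integral>\<^sub>0\<^sup>x t^(\<sigma>-1) (1+t)^(-v) dt\<close>,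
  integrated termwise.\<close>

definition incomplete_beta :: "real \<Rightarrow> real \<Rightarrow> real \<Rightarrow> real" where
  "incomplete_beta \<sigma> \<tau> u = u powr \<sigma> * (\<Sum>n. pochhammer (1 - \<tau>) n / fact n / (real n + \<sigma>) * u^n)"

definition binomial_integral :: "real \<Rightarrow> real \<Rightarrow> real \<Rightarrow> real" where
  "binomial_integral v \<sigma> x = x powr \<sigma> * (\<Sum>n. ((-v) gchoose n) / (real n + \<sigma>) * x^n)"

lemma incomplete_beta_0 [simp]: "incomplete_beta \<sigma> \<tau> 0 = 0"
  by (simp add: incomplete_beta_def)

lemma binomial_integral_0 [simp]: "binomial_integral v \<sigma> 0 = 0"
  by (simp add: binomial_integral_def)

lemma incomplete_beta_antiderivative:
  assumes "\<sigma> > 0" "0 < \<tau>" "\<tau> < 1"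
  shows "continuous_on {0..1} (incomplete_beta \<sigma> \<tau>)"
    and "\<And>u. 0 < u \<Longrightarrow> u < 1 \<Longrightarrow>
      (incomplete_beta \<sigma> \<tau> has_real_derivative u powr (\<sigma> - 1) * (1 - u) powr (\<tau> - 1)) (at u)"
proof -
  have "\<bar>pochhammer (1 - \<tau>) n / fact n\<bar> = pochhammer (1 - \<tau>) n / fact n" for n
    using assms by (simp add: pochhammer_nonneg)
  then have summable: "summable (\<lambda>n. \<bar>pochhammer (1 - \<tau>) n / fact n\<bar> / (real n + \<sigma>))"
    using summable_pochhammer_div_fact_div[of "1 - \<tau>" \<sigma>] assms by simp
  have sums: "(\<lambda>n. pochhammer (1 - \<tau>) n / fact n * u^n) sums (1 - u) powr (\<tau> - 1)"
    if "0 < u" "u < 1" for u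
  proof -
    have "((\<tau> - 1) gchoose n) * (-u)^n = ((-1)^n * (-1)^n) * (pochhammer (1 - \<tau>) n / fact n * u^n)" for n
      unfolding gbinomial_pochhammer power_minus[of u n] by simp
    then show ?thesis
      using gen_binomial_real[of "-u" "\<tau> - 1"] that by simp
  qed
  have eq: "incomplete_beta \<sigma> \<tau> = (\<lambda>u. u powr \<sigma> * (\<Sum>n. pochhammer (1 - \<tau>) n / fact n / (real n + \<sigma>) * u^n))"
    by (simp add: incomplete_beta_def fun_eq_iff)
  note F = powr_powser_antiderivative[OF assms(1) summable sums, folded eq]
  show "continuous_on {0..1} (incomplete_beta \<sigma> \<tau>)"
    by (rule F(1))
  show "(incomplete_beta \<sigma> \<tau> has_real_derivative u powr (\<sigma> - 1) * (1 - u) powr (\<tau> - 1)) (at u)"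
    if "0 < u" "u < 1" for u
    using F(2) that by simp
qed

lemma summable_abs_gbinomial_div:
  fixes v \<sigma> :: real
  assumes "0 < v" "v < 1" "\<sigma> > 0"
  shows "summable (\<lambda>n. \<bar>(-v) gchoose n\<bar> / (real n + \<sigma>))"
proof -
  have "\<bar>(-v) gchoose n\<bar> = pochhammer v n / fact n" for n
    using assms by (simp add: gbinomial_pochhammer abs_mult pochhammer_nonneg)
  then show ?thesis
    using summable_pochhammer_div_fact_div[OF assms] by simp
qed

lemma binomial_integral_antiderivative:
  assumes "\<sigma> > 0" "0 < v" "v < 1"
  shows "continuous_on {0..1} (binomial_integral v \<sigma>)"
    and "\<And>x. 0 < x \<Longrightarrow> x < 1 \<Longrightarrow>
      (binomial_integral v \<sigma> has_real_derivative x powr (\<sigma> - 1) * (1 + x) powr (-v)) (at x)"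
proof -
  have sums: "(\<lambda>n. ((-v) gchoose n) * x^n) sums (1 + x) powr (-v)" if "0 < x" "x < 1" for x
    using gen_binomial_real[of x "-v"] that by simp
  have eq: "binomial_integral v \<sigma> = (\<lambda>x. x powr \<sigma> * (\<Sum>n. ((-v) gchoose n) / (real n + \<sigma>) * x^n))"
    by (simp add: binomial_integral_def fun_eq_iff)
  note F = powr_powser_antiderivative[OF assms(1) summable_abs_gbinomial_div[OF assms(2,3,1)] sums,
      folded eq]
  show "continuous_on {0..1} (binomial_integral v \<sigma>)"
    by (rule F(1))
  show "(binomial_integral v \<sigma> has_real_derivative x powr (\<sigma> - 1) * (1 + x) powr (-v)) (at x)"
    if "0 < x" "x < 1" for x
    using F(2) that by simp
qed

lemma incomplete_beta_integrand_substitution: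
  fixes x \<sigma> \<tau> :: real
  assumes "x > 0"
  shows "(x / (1 + x)) powr (\<sigma> - 1) * (1 - x / (1 + x)) powr (\<tau> - 1) * (1 / (1 + x)^2)
       = x powr (\<sigma> - 1) * (1 + x) powr (- (\<sigma> + \<tau>))"
proof -
  have x1: "1 + x > 0"
    using assms by simp
  have "1 - x / (1 + x) = 1 / (1 + x)"
    using x1 by (simp add: field_simps)
  then have "(x / (1 + x)) powr (\<sigma> - 1) * (1 - x / (1 + x)) powr (\<tau> - 1) * (1 / (1 + x)^2)
      = x powr (\<sigma> - 1) / ((1 + x) powr (\<sigma> - 1) * (1 + x) powr (\<tau> - 1) * (1 + x) powr 2)"
    using assms x1 by (simp add: powr_divide powr_realpow)
  also have "(1 + x) powr (\<sigma> - 1) * (1 + x) powr (\<tau> - 1) * (1 + x) powr 2 = (1 + x) powr (\<sigma> + \<tau>)"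
    by (simp flip: powr_add)
  finally show ?thesis
    unfolding powr_minus by (simp add: divide_inverse)
qed

lemma binomial_integral_1_eq_incomplete_beta:
  assumes "\<sigma> > 0" "\<tau> > 0" "\<sigma> + \<tau> < 1"
  shows "binomial_integral (\<sigma> + \<tau>) \<sigma> 1 = incomplete_beta \<sigma> \<tau> (1/2)"
proof -
  have v: "0 < \<sigma> + \<tau>" "\<sigma> + \<tau> < 1" and \<tau>: "\<tau> < 1"
    using assms by auto
  define h where "h x = x / (1 + x)" for x :: real
  define D where "D x = binomial_integral (\<sigma> + \<tau>) \<sigma> x - incomplete_beta \<sigma> \<tau> (h x)" for x
  have "continuous_on {0..1} h"
    unfolding h_def by (intro continuous_intros) auto
  moreover have "h ` {0..1} \<subseteq> {0..1}"
    by (auto simp: h_def field_simps)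
  ultimately have "continuous_on {0..1} D"
    unfolding D_def
    by (intro continuous_intros binomial_integral_antiderivative(1)[OF assms(1) v]
        continuous_on_compose2[OF incomplete_beta_antiderivative(1)[OF assms(1,2) \<tau>]])
  moreover have "(D has_real_derivative 0) (at x)" if x: "0 < x" "x < 1" for x
  proof -
    have hx: "0 < h x" "h x < 1"
      using x by (auto simp: h_def field_simps)
    have "(h has_real_derivative 1 / (1 + x)^2) (at x)"
      unfolding h_def using x by (auto intro!: derivative_eq_intros simp: field_simps power2_eq_square)
    from DERIV_chain2[OF incomplete_beta_antiderivative(2)[OF assms(1,2) \<tau> hx] this]
      binomial_integral_antiderivative(2)[OF assms(1) v x]
    have "(D has_real_derivative x powr (\<sigma> - 1) * (1 + x) powr (-(\<sigma> + \<tau>))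
        - h x powr (\<sigma> - 1) * (1 - h x) powr (\<tau> - 1) * (1 / (1 + x)^2)) (at x)"
      unfolding D_def by (rule DERIV_diff[rotated])
    then show ?thesis
      unfolding h_def incomplete_beta_integrand_substitution[OF x(1)] by simp
  qed
  ultimately have "D 1 = D 0"
    by (intro DERIV_isconst_end) auto
  then show ?thesis
    by (simp add: D_def h_def)
qed

lemma incomplete_beta_reflection:
  assumes "0 < \<sigma>" "\<sigma> < 1" "0 < \<tau>" "\<tau> < 1"
  shows "incomplete_beta \<sigma> \<tau> (1/2) + incomplete_beta \<tau> \<sigma> (1/2) = incomplete_beta \<sigma> \<tau> 1"
proof -
  note B\<sigma> = incomplete_beta_antiderivative[OF assms(1,3,4)]
  note B\<tau> = incomplete_beta_antiderivative[OF assms(3,1,2)]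
  define E where "E u = incomplete_beta \<sigma> \<tau> u + incomplete_beta \<tau> \<sigma> (1 - u)" for u
  have "continuous_on {1/2..1} (\<lambda>u. incomplete_beta \<tau> \<sigma> (1 - u))"
    by (rule continuous_on_compose2[OF B\<tau>(1)]) (auto intro!: continuous_intros)
  then have "continuous_on {1/2..1} E"
    unfolding E_def by (intro continuous_intros continuous_on_subset[OF B\<sigma>(1)]) auto
  moreover have "(E has_real_derivative 0) (at u)" if u: "1/2 < u" "u < 1" for u
  proof -
    have "((\<lambda>u. incomplete_beta \<tau> \<sigma> (1 - u)) has_real_derivative
        (1 - u) powr (\<tau> - 1) * (1 - (1 - u)) powr (\<sigma> - 1) * (-1)) (at u)"
      by (rule DERIV_chain2[OF B\<tau>(2)]) (use u in \<open>auto intro!: derivative_eq_intros\<close>)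
    from DERIV_add[OF B\<sigma>(2) this] show ?thesis
      using u unfolding E_def by (simp add: mult_ac)
  qed
  ultimately have "E 1 = E (1/2)"
    by (intro DERIV_isconst_end) auto
  then show ?thesis
    by (simp add: E_def)
qed

lemma incomplete_beta_1:
  assumes "0 < \<sigma>" "0 < \<tau>" "\<tau> < 1"
  shows "incomplete_beta \<sigma> \<tau> 1 = Beta \<sigma> \<tau>"
proof -
  note B = incomplete_beta_antiderivative[OF assms]
  have "((\<lambda>u. u powr (\<sigma> - 1) * (1 - u) powr (\<tau> - 1)) has_integral
      (incomplete_beta \<sigma> \<tau> 1 - incomplete_beta \<sigma> \<tau> 0)) {0..1}"
    using B(1) B(2) by (intro fundamental_theorem_of_calculus_interior)
      (auto simp: has_real_derivative_iff_has_vector_derivative)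
  moreover have "((\<lambda>u. u powr (\<sigma> - 1) * (1 - u) powr (\<tau> - 1)) has_integral Beta \<sigma> \<tau>) {0..1}"
    using assms by (intro has_integral_Beta_real) auto
  ultimately have "incomplete_beta \<sigma> \<tau> 1 - incomplete_beta \<sigma> \<tau> 0 = Beta \<sigma> \<tau>"
    by (rule has_integral_unique)
  then show ?thesis
    by simp
qed

lemma beta_series_real:
  fixes \<sigma> \<tau> :: real
  assumes "\<sigma> > 0" "\<tau> > 0" "\<sigma> + \<tau> < 1"
  shows "(\<lambda>n. ((-(\<sigma> + \<tau>)) gchoose n) * (1 / (real n + \<sigma>) + 1 / (real n + \<tau>))) sums Beta \<sigma> \<tau>"
proof -
  have v: "0 < \<sigma> + \<tau>" "\<sigma> + \<tau> < 1"
    using assms by auto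
  have sums: "(\<lambda>n. ((-(\<sigma> + \<tau>)) gchoose n) / (real n + \<rho>)) sums binomial_integral (\<sigma> + \<tau>) \<rho> 1"
    if "\<rho> > 0" for \<rho>
  proof -
    have norm_eq: "norm (((-(\<sigma> + \<tau>)) gchoose n) / (real n + \<rho>)) = \<bar>(-(\<sigma> + \<tau>)) gchoose n\<bar> / (real n + \<rho>)" for n
      using that by (simp add: abs_divide add_nonneg_pos)
    have "summable (\<lambda>n. norm (((-(\<sigma> + \<tau>)) gchoose n) / (real n + \<rho>)))"
      unfolding norm_eq by (rule summable_abs_gbinomial_div[OF v that])
    then show ?thesis
      unfolding binomial_integral_def by (simp add: summable_sums summable_norm_cancel)
  qed
  have "binomial_integral (\<sigma> + \<tau>) \<sigma> 1 + binomial_integral (\<sigma> + \<tau>) \<tau> 1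
      = incomplete_beta \<sigma> \<tau> (1/2) + incomplete_beta \<tau> \<sigma> (1/2)"
    using binomial_integral_1_eq_incomplete_beta[OF assms]
      binomial_integral_1_eq_incomplete_beta[of \<tau> \<sigma>] assms by (simp add: ac_simps)
  also have "\<dots> = Beta \<sigma> \<tau>"
    using assms by (simp add: incomplete_beta_reflection incomplete_beta_1)
  finally have "(\<lambda>n. ((-(\<sigma> + \<tau>)) gchoose n) / (real n + \<sigma>) + ((-(\<sigma> + \<tau>)) gchoose n) / (real n + \<tau>))
      sums Beta \<sigma> \<tau>"
    using sums_add[OF sums[OF assms(1)] sums[OF assms(2)]] by simp
  then show ?thesis
    by (simp add: distrib_left)
qed

section \<open>Locally uniform convergence of the Beta series\<close>

definition beta_series_term :: "complex \<Rightarrow> complex \<Rightarrow> nat \<Rightarrow> complex" where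
  "beta_series_term v \<sigma> n = ((-v) gchoose n) * (1 / (of_nat n + \<sigma>) + 1 / (of_nat n + (v - \<sigma>)))"

lemma norm_pochhammer_le:
  fixes z :: complex and a :: real
  assumes "\<And>i. i < k \<Longrightarrow> norm (z + of_nat i) \<le> a + of_nat i"
  shows "norm (pochhammer z k) \<le> pochhammer a k"
  using assms
proof (induction k)
  case (Suc k)
  then have IH: "norm (pochhammer z k) \<le> pochhammer a k"
    by simp
  have "norm (pochhammer z (Suc k)) = norm (pochhammer z k) * norm (z + of_nat k)"
    by (simp add: pochhammer_Suc norm_mult)
  also have "\<dots> \<le> pochhammer a k * (a + of_nat k)"
    using IH Suc.prems[of k] by (intro mult_mono) (auto intro: order.trans[OF norm_ge_zero])
  finally show ?case
    by (simp add: pochhammer_Suc)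
qed simp

lemma norm_add_of_nat_le:
  fixes v :: complex and R r \<rho> :: real and j :: nat
  assumes "norm v \<le> R" "Re v \<le> r" "r < \<rho>"
    and "real j \<ge> R" "real j \<ge> R^2 / (\<rho> - r) + \<bar>\<rho>\<bar> + \<bar>r\<bar>"
  shows "norm (v + of_nat j) \<le> \<rho> + real j"
proof -
  have d: "\<rho> - r > 0"
    using assms by simp
  have q: "0 \<le> R^2 / (\<rho> - r)"
    using d by simp
  have "\<bar>Re v\<bar> \<le> R"
    using abs_Re_le_cmod[of v] assms(1) by linarith
  then have "(Re v + real j)^2 \<le> (r + real j)^2"
    using assms by (intro power_mono) auto
  moreover have "(Im v)^2 \<le> R^2"
    using abs_Im_le_cmod[of v] assms(1) by (metis abs_ge_zero order.trans power2_abs power_mono)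
  moreover have "(r + real j)^2 + R^2 \<le> (\<rho> + real j)^2"
  proof -
    have "R^2 / (\<rho> - r) \<le> real j"
      using assms(5) abs_ge_zero[of \<rho>] abs_ge_zero[of r] by linarith
    then have "R^2 \<le> (\<rho> - r) * real j"
      using d by (simp add: divide_le_eq mult.commute)
    also have "\<dots> \<le> (\<rho> - r) * (\<rho> + r + 2 * real j)"
      using d assms(5) q by (intro mult_left_mono) linarith+
    finally show ?thesis
      by (simp add: power2_eq_square algebra_simps)
  qed
  ultimately have "(norm (v + of_nat j))^2 \<le> (\<rho> + real j)^2"
    unfolding cmod_power2 by simp
  moreover have "0 \<le> \<rho> + real j"
    using assms(5) q by linarith
  ultimately show ?thesis
    by (rule power2_le_imp_le)
qed

lemma norm_pochhammer_le_shifted: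
  fixes v :: complex and R r \<rho> :: real
  assumes v: "norm v \<le> R" "Re v \<le> r" and \<rho>: "r < \<rho>" "0 < \<rho>" and "J \<le> n"
    and J: "real J \<ge> R" "real J \<ge> R^2 / (\<rho> - r) + \<bar>\<rho>\<bar> + \<bar>r\<bar>"
  shows "norm (pochhammer v n) \<le> pochhammer R J / pochhammer \<rho> J * pochhammer \<rho> n"
proof -
  have "norm (v + of_nat i) \<le> R + of_nat i" for i
    using norm_triangle_ineq[of v "of_nat i"] v by simp
  then have p1: "norm (pochhammer v J) \<le> pochhammer R J"
    by (intro norm_pochhammer_le)
  have "norm (v + of_nat (J + i)) \<le> \<rho> + real (J + i)" for i
    using J by (intro norm_add_of_nat_le[OF v \<rho>(1)]) auto
  then have p2: "norm (pochhammer (v + of_nat J) (n - J)) \<le> pochhammer (\<rho> + of_nat J) (n - J)"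
    by (intro norm_pochhammer_le) (simp add: add.assoc)
  have "norm (pochhammer v n) = norm (pochhammer v J) * norm (pochhammer (v + of_nat J) (n - J))"
    using pochhammer_product[OF \<open>J \<le> n\<close>, of v] by (simp add: norm_mult)
  also have "\<dots> \<le> pochhammer R J * pochhammer (\<rho> + of_nat J) (n - J)"
    using p1 p2 by (intro mult_mono) (auto intro: order.trans[OF norm_ge_zero])
  also have "\<dots> = pochhammer R J / pochhammer \<rho> J * pochhammer \<rho> n"
    using pochhammer_product[OF \<open>J \<le> n\<close>, of \<rho>] pochhammer_pos[OF \<rho>(2), of J] by simp
  finally show ?thesis .
qed

lemma norm_gbinomial_neg_le_powr:
  fixes R r :: real
  assumes "R \<ge> 0" "r < 2"
  obtains \<rho> K N where "0 < \<rho>" "\<rho> < 2" "0 \<le> K"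
    "\<And>v n. norm v \<le> R \<Longrightarrow> Re v \<le> r \<Longrightarrow> n \<ge> N \<Longrightarrow> norm ((-v) gchoose n) \<le> K * real n powr (\<rho> - 1)"
proof -
  define \<rho> where "\<rho> = (max r 0 + 2) / 2"
  have \<rho>: "0 < \<rho>" "\<rho> < 2" "r < \<rho>"
    using assms by (auto simp: \<rho>_def)
  define J where "J = nat \<lceil>R + R^2 / (\<rho> - r) + \<bar>\<rho>\<bar> + \<bar>r\<bar>\<rceil>"
  have "R^2 / (\<rho> - r) \<ge> 0"
    using \<rho> by simp
  then have J: "real J \<ge> R" "real J \<ge> R^2 / (\<rho> - r) + \<bar>\<rho>\<bar> + \<bar>r\<bar>"
    unfolding J_def using assms by linarith+
  obtain C where C: "C > 0" "\<And>n. n \<ge> 1 \<Longrightarrow> pochhammer \<rho> n / fact n \<le> C * real n powr (\<rho> - 1)"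
    using pochhammer_div_fact_le_powr[OF \<rho>(1)] by blast
  define Q where "Q = pochhammer R J / pochhammer \<rho> J"
  have "0 \<le> pochhammer R J"
    using assms(1) by (simp add: pochhammer_prod prod_nonneg)
  moreover have "0 < pochhammer \<rho> J"
    using \<rho>(1) by (rule pochhammer_pos)
  ultimately have Q: "0 \<le> Q"
    by (simp add: Q_def)
  have bound: "norm ((-v) gchoose n) \<le> Q * C * real n powr (\<rho> - 1)"
    if v: "norm v \<le> R" "Re v \<le> r" and n: "max J 1 \<le> n" for v n
  proof -
    have "norm ((-v) gchoose n) = norm (pochhammer v n) / fact n"
      by (simp add: gbinomial_pochhammer norm_mult norm_divide norm_power)
    also have "\<dots> \<le> Q * pochhammer \<rho> n / fact n"
      using norm_pochhammer_le_shifted[OF v \<rho>(3,1) _ J, of n] n unfolding Q_def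
      by (intro divide_right_mono) auto
    also have "\<dots> \<le> Q * (C * real n powr (\<rho> - 1))"
      unfolding times_divide_eq_right[symmetric] using C(2)[of n] n Q by (intro mult_left_mono) auto
    finally show ?thesis
      by (simp add: mult.assoc)
  qed
  have "0 \<le> Q * C"
    using Q C(1) by simp
  from that[OF \<rho>(1,2) this bound] show thesis .
qed

definition pair_factor :: "complex \<Rightarrow> nat \<Rightarrow> complex \<Rightarrow> complex" where
  "pair_factor v n w =
     (of_nat n * (2 - v) + 1 + w - v * w) / ((of_nat n + w) * of_nat (Suc n) * (of_nat (Suc n) + w))"

lemma gbinomial_neg_Suc:
  fixes v :: complex
  shows "(-v) gchoose Suc n = ((-v) gchoose n) * (- (v + of_nat n) / of_nat (Suc n))"
  by (simp add: gbinomial_pochhammer pochhammer_Suc field_simps)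

lemma pair_factor_eq:
  assumes "of_nat n + w \<noteq> (0::complex)" "of_nat (Suc n) + w \<noteq> 0"
  shows "1 / (of_nat n + w) - (v + of_nat n) / of_nat (Suc n) * (1 / (of_nat (Suc n) + w)) = pair_factor v n w"
proof -
  have "1 / (of_nat n + w) - (v + of_nat n) / of_nat (Suc n) * (1 / (of_nat (Suc n) + w))
      = 1 / (of_nat n + w) - (v + of_nat n) / (of_nat (Suc n) * (of_nat (Suc n) + w))"
    by simp
  also have "\<dots> = (1 * (of_nat (Suc n) * (of_nat (Suc n) + w)) - (v + of_nat n) * (of_nat n + w))
      / ((of_nat n + w) * (of_nat (Suc n) * (of_nat (Suc n) + w)))"
    using assms by (intro diff_frac_eq) (auto simp del: of_nat_Suc)
  also have "1 * (of_nat (Suc n) * (of_nat (Suc n) + w)) - (v + of_nat n) * (of_nat n + w)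
      = of_nat n * (2 - v) + 1 + w - v * w"
    by (simp add: algebra_simps)
  finally show ?thesis
    by (simp add: pair_factor_def mult.assoc del: of_nat_Suc)
qed

lemma beta_series_term_pair:
  assumes "of_nat n + \<sigma> \<noteq> 0" "of_nat (Suc n) + \<sigma> \<noteq> 0"
    and "of_nat n + (v - \<sigma>) \<noteq> 0" "of_nat (Suc n) + (v - \<sigma>) \<noteq> 0"
  shows "beta_series_term v \<sigma> n + beta_series_term v \<sigma> (Suc n)
       = ((-v) gchoose n) * (pair_factor v n \<sigma> + pair_factor v n (v - \<sigma>))"
proof -
  have ring: "c * (a + b) + c * (- q) * (a' + b') = c * ((a - q * a') + (b - q * b'))" for c a b q a' b' :: complex
    by (simp add: algebra_simps)
  show ?thesis
    unfolding beta_series_term_def gbinomial_neg_Suc minus_divide_left[symmetric]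
      pair_factor_eq[OF assms(1,2), symmetric] pair_factor_eq[OF assms(3,4), symmetric]
    by (rule ring)
qed

lemma norm_of_nat_add_ge: "norm (of_nat n + w :: complex) \<ge> real n - norm w"
  using norm_diff_ineq[of "of_nat n :: complex" w] by simp

lemma norm_pair_factor_numerator_le:
  fixes v w :: complex and R :: real
  assumes "norm v \<le> R" "norm w \<le> 2 * R"
  shows "norm (of_nat n * (2 - v) + 1 + w - v * w) \<le> (real n + 1) * (2 + 2*R + 2*R^2)"
proof -
  have R0: "R \<ge> 0"
    using assms(1) norm_ge_zero[of v] by linarith
  have "norm (of_nat n * (2 - v) + 1 + w - v * w)
      \<le> norm (of_nat n * (2 - v)) + norm (1::complex) + norm w + norm (v * w)"
    by (smt (verit) norm_triangle_ineq norm_triangle_ineq4)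
  also have "norm (of_nat n * (2 - v)) \<le> real n * (2 + R)"
    using norm_triangle_ineq4[of 2 v] assms(1) by (simp add: norm_mult mult_left_mono)
  also have "norm (v * w) \<le> R * (2 * R)"
    unfolding norm_mult using assms R0 by (intro mult_mono) auto
  finally have "norm (of_nat n * (2 - v) + 1 + w - v * w) \<le> real n * (2 + R) + 1 + 2 * R + 2 * R^2"
    using assms(2) by (simp add: power2_eq_square)
  also have "\<dots> \<le> (real n + 1) * (2 + 2*R + 2*R^2)"
  proof -
    have "(real n + 1) * (2 + 2*R + 2*R^2) = real n * (2 + R) + 1 + 2*R + 2*R^2 + (real n * (R + 2 * R^2) + 1)"
      by (simp add: algebra_simps)
    moreover have "0 \<le> real n * (R + 2 * R^2)"
      using R0 by simp
    ultimately show ?thesis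
      by linarith
  qed
  finally show ?thesis .
qed

lemma norm_pair_factor_le:
  fixes R :: real
  assumes "norm v \<le> R" "norm w \<le> 2 * R" "real n \<ge> 4 * R" "n \<ge> 1"
  shows "norm (pair_factor v n w) \<le> 8 * (1 + R + R^2) / (real n)^2"
proof -
  have R0: "R \<ge> 0"
    using assms(1) norm_ge_zero[of v] by linarith
  have n0: "real n > 0"
    using assms by simp
  note num = norm_pair_factor_numerator_le[OF assms(1,2), of n]
  have "norm (of_nat n + w) \<ge> real n / 2" "norm (of_nat (Suc n) + w) \<ge> real n / 2"
    using norm_of_nat_add_ge[of n w] norm_of_nat_add_ge[of "Suc n" w] assms by simp_all
  then have den: "norm ((of_nat n + w) * of_nat (Suc n) * (of_nat (Suc n) + w))
      \<ge> (real n / 2) * (real n + 1) * (real n / 2)"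
    unfolding norm_mult norm_of_nat using n0 by (intro mult_mono) auto
  have "norm (pair_factor v n w)
      \<le> ((real n + 1) * (2 + 2*R + 2*R^2)) / ((real n / 2) * (real n + 1) * (real n / 2))"
    unfolding pair_factor_def norm_divide by (rule frac_le[OF _ num _ den]) (use n0 R0 in auto)
  also have "\<dots> = (2 + 2*R + 2*R^2) / ((real n)^2 / 4)"
  proof -
    have "(real n / 2) * (real n + 1) * (real n / 2) = (real n + 1) * ((real n)^2 / 4)"
      by (simp add: power2_eq_square)
    then show ?thesis
      using n0 by simp
  qed
  also have "\<dots> = 8 * (1 + R + R^2) / (real n)^2"
    by (simp add: divide_divide_eq_right algebra_simps)
  finally show ?thesis .
qed

lemma norm_beta_series_term_pair_le:
  fixes R :: real
  assumes "norm v \<le> R" "norm \<sigma> \<le> R" "real n \<ge> 4 * R" "n \<ge> 1"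
  shows "norm (beta_series_term v \<sigma> n + beta_series_term v \<sigma> (Suc n))
       \<le> norm ((-v) gchoose n) * (16 * (1 + R + R^2) / (real n)^2)"
proof -
  have w: "norm (v - \<sigma>) \<le> 2 * R" "norm \<sigma> \<le> 2 * R"
    using norm_triangle_ineq4[of v \<sigma>] assms norm_ge_zero[of v] by linarith+
  have nz: "of_nat n + w \<noteq> 0" "of_nat (Suc n) + w \<noteq> 0" if "norm w \<le> 2 * R" for w :: complex
    using norm_of_nat_add_ge[of n w] norm_of_nat_add_ge[of "Suc n" w] that assms
    by (auto simp del: of_nat_Suc)
  have "norm (beta_series_term v \<sigma> n + beta_series_term v \<sigma> (Suc n))
      = norm ((-v) gchoose n) * norm (pair_factor v n \<sigma> + pair_factor v n (v - \<sigma>))"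
    using beta_series_term_pair[OF nz[OF w(2)] nz[OF w(1)]] by (simp add: norm_mult)
  also have "\<dots> \<le> norm ((-v) gchoose n) * (8 * (1 + R + R^2) / (real n)^2 + 8 * (1 + R + R^2) / (real n)^2)"
    using norm_pair_factor_le[OF assms(1) w(2) assms(3,4)] norm_pair_factor_le[OF assms(1) w(1) assms(3,4)]
    by (intro mult_left_mono order.trans[OF norm_triangle_ineq] add_mono) auto
  finally show ?thesis
    by simp
qed

lemma norm_beta_series_term_le:
  fixes R :: real
  assumes "norm v \<le> R" "norm \<sigma> \<le> R" "real n \<ge> 4 * R" "n \<ge> 1"
  shows "norm (beta_series_term v \<sigma> n) \<le> norm ((-v) gchoose n) * (4 / real n)"
proof -
  have "norm (1 / (of_nat n + w)) \<le> 2 / real n" if "norm w \<le> 2 * R" for w :: complex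
  proof -
    have "norm (of_nat n + w) \<ge> real n / 2"
      using norm_of_nat_add_ge[of n w] that assms by linarith
    then show ?thesis
      using assms by (simp add: norm_divide divide_simps)
  qed
  moreover have "norm (v - \<sigma>) \<le> 2 * R" "norm \<sigma> \<le> 2 * R"
    using norm_triangle_ineq4[of v \<sigma>] assms norm_ge_zero[of v] by linarith+
  ultimately have "norm (beta_series_term v \<sigma> n) \<le> norm ((-v) gchoose n) * (2 / real n + 2 / real n)"
    unfolding beta_series_term_def norm_mult
    by (intro mult_left_mono order.trans[OF norm_triangle_ineq] add_mono) auto
  then show ?thesis
    by simp
qed

lemma beta_series_term_bounds:
  fixes R r :: real
  assumes "R \<ge> 0" "r < 2"
  obtains \<rho> N K where "\<rho> < 2"
    "\<And>v \<sigma> n. norm v \<le> R \<Longrightarrow> norm \<sigma> \<le> R \<Longrightarrow> Re v \<le> r \<Longrightarrow> n \<ge> N \<Longrightarrow>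
       norm (beta_series_term v \<sigma> n) \<le> K * real n powr (\<rho> - 2)"
    "\<And>v \<sigma> n. norm v \<le> R \<Longrightarrow> norm \<sigma> \<le> R \<Longrightarrow> Re v \<le> r \<Longrightarrow> n \<ge> N \<Longrightarrow>
       norm (beta_series_term v \<sigma> n + beta_series_term v \<sigma> (Suc n)) \<le> K * real n powr (\<rho> - 3)"
proof -
  obtain \<rho> K N where "0 < \<rho>" and \<rho>: "\<rho> < 2" and K: "0 \<le> K"
    and bound: "\<And>v n. norm (v::complex) \<le> R \<Longrightarrow> Re v \<le> r \<Longrightarrow> n \<ge> N \<Longrightarrow> norm ((-v) gchoose n) \<le> K * real n powr (\<rho> - 1)"
    using norm_gbinomial_neg_le_powr[OF assms] by blast
  define N' where "N' = max N (max 1 (nat \<lceil>4 * R\<rceil>))"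
  define K' where "K' = 16 * (1 + R + R^2) * K"
  have large: "n \<ge> N" "n \<ge> 1" "real n \<ge> 4 * R" if "n \<ge> N'" for n
    using that by (auto simp: N'_def nat_le_iff) linarith
  have coeff: "norm ((-v) gchoose n) * c \<le> K * real n powr (\<rho> - 1) * c"
    if "norm v \<le> R" "Re v \<le> r" "n \<ge> N'" "c \<ge> 0" for v n c
    using bound[OF that(1,2) large(1)[OF that(3)]] that(4) by (rule mult_right_mono)
  have single: "norm (beta_series_term v \<sigma> n) \<le> K' * real n powr (\<rho> - 2)"
    if v: "norm v \<le> R" "norm \<sigma> \<le> R" "Re v \<le> r" and n: "n \<ge> N'" for v \<sigma> n
  proof -
    have "real n powr (\<rho> - 1) = real n powr (\<rho> - 2) * real n"
      using powr_add[of "real n" "\<rho> - 2" 1] by simp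
    then have "K * real n powr (\<rho> - 1) * (4 / real n) = 4 * K * real n powr (\<rho> - 2)"
      using large[OF n] by simp
    also have "\<dots> \<le> K' * real n powr (\<rho> - 2)"
      unfolding K'_def using K assms(1) by (intro mult_right_mono) (auto simp: algebra_simps)
    finally have "K * real n powr (\<rho> - 1) * (4 / real n) \<le> K' * real n powr (\<rho> - 2)" .
    with norm_beta_series_term_le[OF v(1,2) large(3,2)[OF n]] coeff[OF v(1,3) n, of "4 / real n"]
    show ?thesis
      by simp
  qed
  have pair: "norm (beta_series_term v \<sigma> n + beta_series_term v \<sigma> (Suc n)) \<le> K' * real n powr (\<rho> - 3)"
    if v: "norm v \<le> R" "norm \<sigma> \<le> R" "Re v \<le> r" and n: "n \<ge> N'" for v \<sigma> n
  proof -
    have "real n powr (\<rho> - 1) = real n powr (\<rho> - 3) * (real n)^2"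
      using powr_add[of "real n" "\<rho> - 3" 2] by simp
    then have "K * real n powr (\<rho> - 1) * (16 * (1 + R + R^2) / (real n)^2) = K' * real n powr (\<rho> - 3)"
      using large[OF n] by (simp add: K'_def)
    with norm_beta_series_term_pair_le[OF v(1,2) large(3,2)[OF n]]
      coeff[OF v(1,3) n, of "16 * (1 + R + R^2) / (real n)^2"] assms(1)
    show ?thesis
      by simp
  qed
  show thesis
    using that[OF \<rho> single pair] .
qed

lemma uniform_limit_from_pairs:
  fixes t :: "nat \<Rightarrow> 'a \<Rightarrow> 'b::real_normed_vector"
  assumes pairs: "uniform_limit A (\<lambda>m x. \<Sum>i<m. t (2*i) x + t (Suc (2*i)) x) g sequentially"
    and terms: "\<And>e. e > 0 \<Longrightarrow> \<exists>N. \<forall>n\<ge>N. \<forall>x\<in>A. norm (t n x) < e"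
  shows "uniform_limit A (\<lambda>N x. \<Sum>n<N. t n x) g sequentially"
  unfolding uniform_limit_sequentially_iff
proof (intro allI impI)
  fix e :: real assume e: "e > 0"
  obtain M where M: "\<And>m x. m \<ge> M \<Longrightarrow> x \<in> A \<Longrightarrow> dist (\<Sum>i<m. t (2*i) x + t (Suc (2*i)) x) (g x) < e/2"
    using pairs e unfolding uniform_limit_sequentially_iff by (meson half_gt_zero)
  obtain N where N: "\<And>n x. n \<ge> N \<Longrightarrow> x \<in> A \<Longrightarrow> norm (t n x) < e/2"
    using terms[of "e/2"] e by auto
  have paired: "(\<Sum>k<2*m. t k x) = (\<Sum>i<m. t (2*i) x + t (Suc (2*i)) x)" for m x
    by (induction m) (simp_all add: add.assoc)
  have "dist (\<Sum>k<n. t k x) (g x) < e" if n: "n \<ge> 2*M + N + 1" and x: "x \<in> A" for n x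
  proof -
    define m where "m = n div 2"
    have "n = 2*m \<or> n = Suc (2*m)" and m: "m \<ge> M" "2*m \<ge> N"
      using n unfolding m_def by presburger+
    moreover have pairs_m: "dist (\<Sum>k<2*m. t k x) (g x) < e/2"
      unfolding paired using m(1) x by (rule M)
    moreover have "dist (\<Sum>k<Suc (2*m). t k x) (g x) < e"
    proof -
      have "dist (\<Sum>k<Suc (2*m). t k x) (g x) \<le> dist (\<Sum>k<2*m. t k x) (g x) + norm (t (2*m) x)"
        unfolding dist_norm sum.lessThan_Suc
        using norm_triangle_ineq[of "(\<Sum>k<2*m. t k x) - g x" "t (2*m) x"] by (simp add: algebra_simps)
      moreover have "norm (t (2*m) x) < e/2"
        using m(2) x by (rule N)
      ultimately show ?thesis
        using pairs_m by simp
    qed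
    ultimately show ?thesis
      using e by auto
  qed
  then show "\<exists>N'. \<forall>n\<ge>N'. \<forall>x\<in>A. dist (\<Sum>k<n. t k x) (g x) < e"
    by blast
qed

lemma uniform_limit_partial_sums_suminf:
  fixes t :: "nat \<Rightarrow> 'a \<Rightarrow> 'b::real_normed_vector"
  assumes "uniform_limit A (\<lambda>N x. \<Sum>n<N. t n x) g sequentially"
  shows "uniform_limit A (\<lambda>N x. \<Sum>n<N. t n x) (\<lambda>x. \<Sum>n. t n x) sequentially"
proof -
  have "g x = (\<Sum>n. t n x)" if "x \<in> A" for x
    using tendsto_uniform_limitI[OF assms that] by (simp add: sums_def sums_unique)
  then show ?thesis
    using assms by (intro uniform_limit_cong'[THEN iffD1, OF _ _ assms]) auto
qed

lemma uniform_limit_series_powr_pairs: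
  fixes t :: "nat \<Rightarrow> 'a \<Rightarrow> 'b::banach"
  assumes "\<rho> < 2"
    and single: "\<And>n x. n \<ge> N \<Longrightarrow> x \<in> A \<Longrightarrow> norm (t n x) \<le> K * real n powr (\<rho> - 2)"
    and pair: "\<And>n x. n \<ge> N \<Longrightarrow> x \<in> A \<Longrightarrow> norm (t n x + t (Suc n) x) \<le> K * real n powr (\<rho> - 3)"
  shows "uniform_limit A (\<lambda>N x. \<Sum>n<N. t n x) (\<lambda>x. \<Sum>n. t n x) sequentially"
proof (rule uniform_limit_partial_sums_suminf[OF uniform_limit_from_pairs])
  show "uniform_limit A (\<lambda>m x. \<Sum>i<m. t (2*i) x + t (Suc (2*i)) x)
      (\<lambda>x. \<Sum>i. t (2*i) x + t (Suc (2*i)) x) sequentially"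
  proof (rule Weierstrass_m_test_ev)
    show "\<forall>\<^sub>F m in sequentially. \<forall>x\<in>A. norm (t (2*m) x + t (Suc (2*m)) x) \<le> K * real (2*m) powr (\<rho> - 3)"
      using eventually_ge_at_top[of N]
    proof eventually_elim
      case (elim m)
      then have "N \<le> 2 * m"
        by simp
      then show ?case
        using pair[of "2 * m"] by simp
    qed
    have "summable (\<lambda>m. K * 2 powr (\<rho> - 3) * real m powr (\<rho> - 3))"
      using assms(1) by (intro summable_mult) (simp add: summable_real_powr_iff)
    then show "summable (\<lambda>m. K * real (2*m) powr (\<rho> - 3))"
      by (simp add: powr_mult mult.assoc)
  qed
  fix e :: real assume e: "e > 0"
  have "(\<lambda>n. K * real n powr (\<rho> - 2)) \<longlonglongrightarrow> 0"
    using assms(1) by (intro tendsto_mult_right_zero tendsto_neg_powr filterlim_real_sequentially) auto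
  then obtain N' where N': "\<And>n. n \<ge> N' \<Longrightarrow> K * real n powr (\<rho> - 2) < e"
    using e unfolding LIMSEQ_iff by fastforce
  have "norm (t n x) < e" if "n \<ge> max N N'" "x \<in> A" for n x
    using single[of n x] N'[of n] that by force
  then show "\<exists>N. \<forall>n\<ge>N. \<forall>x\<in>A. norm (t n x) < e"
    by blast
qed

lemma uniform_limit_beta_series:
  fixes V S :: "'a \<Rightarrow> complex" and R r :: real
  assumes "R \<ge> 0" "r < 2"
    and V: "\<And>x. x \<in> A \<Longrightarrow> norm (V x) \<le> R" "\<And>x. x \<in> A \<Longrightarrow> Re (V x) \<le> r"
    and S: "\<And>x. x \<in> A \<Longrightarrow> norm (S x) \<le> R"
  shows "uniform_limit A (\<lambda>N x. \<Sum>n<N. beta_series_term (V x) (S x) n)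
           (\<lambda>x. \<Sum>n. beta_series_term (V x) (S x) n) sequentially"
proof -
  obtain \<rho> N K where \<rho>: "\<rho> < 2"
    and single: "\<And>v \<sigma> n. norm (v::complex) \<le> R \<Longrightarrow> norm \<sigma> \<le> R \<Longrightarrow> Re v \<le> r \<Longrightarrow> n \<ge> N \<Longrightarrow>
       norm (beta_series_term v \<sigma> n) \<le> K * real n powr (\<rho> - 2)"
    and pair: "\<And>v \<sigma> n. norm (v::complex) \<le> R \<Longrightarrow> norm \<sigma> \<le> R \<Longrightarrow> Re v \<le> r \<Longrightarrow> n \<ge> N \<Longrightarrow>
       norm (beta_series_term v \<sigma> n + beta_series_term v \<sigma> (Suc n)) \<le> K * real n powr (\<rho> - 3)"
    by (rule beta_series_term_bounds[OF assms(1,2)]) auto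
  show ?thesis
    using \<rho> by (rule uniform_limit_series_powr_pairs[where N = N and K = K]) (use single pair V S in auto)
qed

section \<open>Analytic continuation of the Beta series\<close>

lemma countable_nonpos_Ints: "countable (\<int>\<^sub>\<le>\<^sub>0 :: 'a::ring_1 set)"
  using countable_int nonpos_Ints_subset_Ints by (rule countable_subset[rotated])

lemma
  fixes c :: complex
  shows closed_diff_nonpos_Ints: "closed {z. c - z \<in> \<int>\<^sub>\<le>\<^sub>0}" "closed {z. z - c \<in> \<int>\<^sub>\<le>\<^sub>0}"
    and countable_diff_nonpos_Ints: "countable {z. c - z \<in> \<int>\<^sub>\<le>\<^sub>0}" "countable {z. z - c \<in> \<int>\<^sub>\<le>\<^sub>0}"
proof -
  have "{z. c - z \<in> \<int>\<^sub>\<le>\<^sub>0} = (\<lambda>z. c - z) -` \<int>\<^sub>\<le>\<^sub>0" "{z. z - c \<in> \<int>\<^sub>\<le>\<^sub>0} = (\<lambda>z. z - c) -` \<int>\<^sub>\<le>\<^sub>0"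
    by auto
  then show "closed {z. c - z \<in> \<int>\<^sub>\<le>\<^sub>0}" "closed {z. z - c \<in> \<int>\<^sub>\<le>\<^sub>0}"
    by (auto intro!: continuous_closed_vimage continuous_intros)
  have "{z. c - z \<in> \<int>\<^sub>\<le>\<^sub>0} = (\<lambda>w. c - w) ` \<int>\<^sub>\<le>\<^sub>0" "{z. z - c \<in> \<int>\<^sub>\<le>\<^sub>0} = (\<lambda>w. w + c) ` \<int>\<^sub>\<le>\<^sub>0"
    by (auto intro: image_eqI[of _ _ "c - _"] image_eqI[of _ _ "_ - c"])
  then show "countable {z. c - z \<in> \<int>\<^sub>\<le>\<^sub>0}" "countable {z. z - c \<in> \<int>\<^sub>\<le>\<^sub>0}"
    by (simp_all add: countable_nonpos_Ints)
qed

lemma holomorphic_beta_series_term: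
  assumes "V holomorphic_on A" "S holomorphic_on A"
    and "\<And>z. z \<in> A \<Longrightarrow> S z \<notin> \<int>\<^sub>\<le>\<^sub>0" "\<And>z. z \<in> A \<Longrightarrow> V z - S z \<notin> \<int>\<^sub>\<le>\<^sub>0"
  shows "(\<lambda>z. beta_series_term (V z) (S z) n) holomorphic_on A"
proof -
  have "of_nat n + S z \<noteq> 0" "of_nat n + (V z - S z) \<noteq> 0" if "z \<in> A" for z
    using assms(3,4)[OF that] plus_of_nat_eq_0_imp[of "S z" n] plus_of_nat_eq_0_imp[of "V z - S z" n]
    by (auto simp: add.commute)
  then show ?thesis
    unfolding beta_series_term_def gbinomial_pochhammer using assms(1,2)
    by (auto intro!: holomorphic_intros)
qed

lemma holomorphic_beta_series:
  assumes A: "open A" and hol: "V holomorphic_on A" "S holomorphic_on A"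
    and "\<And>z. z \<in> A \<Longrightarrow> Re (V z) < 2"
    and "\<And>z. z \<in> A \<Longrightarrow> S z \<notin> \<int>\<^sub>\<le>\<^sub>0" "\<And>z. z \<in> A \<Longrightarrow> V z - S z \<notin> \<int>\<^sub>\<le>\<^sub>0"
  shows "(\<lambda>z. \<Sum>n. beta_series_term (V z) (S z) n) holomorphic_on A"
proof (rule holomorphic_uniform_sequence[OF A])
  show "(\<lambda>z. \<Sum>n<N. beta_series_term (V z) (S z) n) holomorphic_on A" for N
    using assms by (intro holomorphic_on_sum holomorphic_beta_series_term) auto
  fix z assume "z \<in> A"
  then obtain d where d: "d > 0" "cball z d \<subseteq> A"
    using A open_contains_cball by blast
  have cont: "continuous_on (cball z d) V" "continuous_on (cball z d) S"
    using hol d(2) by (auto intro: holomorphic_on_imp_continuous_on holomorphic_on_subset)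
  obtain R1 where R1: "\<And>w. w \<in> cball z d \<Longrightarrow> norm (V w) \<le> R1"
    using compact_imp_bounded[OF compact_continuous_image[OF cont(1) compact_cball]]
    unfolding bounded_iff by blast
  obtain R2 where R2: "\<And>w. w \<in> cball z d \<Longrightarrow> norm (S w) \<le> R2"
    using compact_imp_bounded[OF compact_continuous_image[OF cont(2) compact_cball]]
    unfolding bounded_iff by blast
  have "continuous_on (cball z d) (\<lambda>w. Re (V w))"
    using cont(1) by (intro continuous_intros)
  moreover have "cball z d \<noteq> {}"
    using d(1) by simp
  ultimately obtain w0 where "w0 \<in> cball z d" and w0: "\<And>w. w \<in> cball z d \<Longrightarrow> Re (V w) \<le> Re (V w0)"
    using continuous_attains_sup[OF compact_cball] by blast
  then have "Re (V w0) < 2"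
    using assms(4) d(2) by blast
  then have "uniform_limit (cball z d) (\<lambda>N w. \<Sum>n<N. beta_series_term (V w) (S w) n)
      (\<lambda>w. \<Sum>n. beta_series_term (V w) (S w) n) sequentially"
    using R1 R2 w0 by (intro uniform_limit_beta_series[of "max 0 (max R1 R2)" "Re (V w0)"]) force+
  with d show "\<exists>d>0. cball z d \<subseteq> A \<and> uniform_limit (cball z d)
      (\<lambda>N w. \<Sum>n<N. beta_series_term (V w) (S w) n) (\<lambda>w. \<Sum>n. beta_series_term (V w) (S w) n) sequentially"
    by blast
qed

lemma islimpt_of_real_interval:
  assumes "a < c" "c < b"
  shows "complex_of_real c islimpt complex_of_real ` {a<..<b}"
  unfolding islimpt_approachable
proof (intro allI impI)
  fix e :: real assume "e > 0"
  define m where "m = min (e/2) ((b - c)/2)"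
  define c' where "c' = c + m"
  have "0 < m"
    using assms \<open>e > 0\<close> by (simp add: m_def)
  moreover have "m \<le> e/2" "m \<le> (b - c)/2"
    unfolding m_def by (rule min.cobounded1, rule min.cobounded2)
  ultimately have "a < c'" "c' < b" "c' \<noteq> c" "dist c' c < e"
    using assms by (auto simp: dist_real_def c'_def)
  then show "\<exists>x'\<in>complex_of_real ` {a<..<b}. x' \<noteq> complex_of_real c \<and> dist x' (complex_of_real c) < e"
    by (intro bexI[of _ "complex_of_real c'"]) (auto simp: dist_of_real)
qed

lemma analytic_continuation_real_interval:
  assumes "f holomorphic_on S" "open S" "connected S"
    and "a < b" "complex_of_real ` {a<..<b} \<subseteq> S"
    and "\<And>t. a < t \<Longrightarrow> t < b \<Longrightarrow> f (complex_of_real t) = 0"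
    and "w \<in> S"
  shows "f w = 0"
proof (rule analytic_continuation[OF assms(1-3,5)])
  have "complex_of_real ((a + b) / 2) \<in> complex_of_real ` {a<..<b}"
    using assms(4) by (intro imageI) auto
  then show "complex_of_real ((a + b) / 2) \<in> S"
    using assms(5) by blast
  show "complex_of_real ((a + b) / 2) islimpt complex_of_real ` {a<..<b}"
    using assms(4) by (intro islimpt_of_real_interval) auto
qed (use assms(6,7) in auto)

lemma open_connected_diff_countable:
  fixes U T :: "complex set"
  assumes "open U" "connected U" "countable T" "closed T"
  shows "open (U - T)" "connected (U - T)"
  using assms by (auto intro: connected_open_diff_countable)

lemma beta_series_term_of_real:
  "beta_series_term (complex_of_real (\<sigma> + \<tau>)) (complex_of_real \<sigma>) n =
     complex_of_real (((-(\<sigma> + \<tau>)) gchoose n) * (1 / (real n + \<sigma>) + 1 / (real n + \<tau>)))"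
  by (simp add: beta_series_term_def gbinomial_pochhammer flip: pochhammer_of_real)

lemma beta_series_eq_Beta_of_real:
  assumes "0 < v" "v < 1" "\<sigma> \<notin> \<int>\<^sub>\<le>\<^sub>0" "complex_of_real v - \<sigma> \<notin> \<int>\<^sub>\<le>\<^sub>0"
  shows "(\<Sum>n. beta_series_term (complex_of_real v) \<sigma> n) = Beta \<sigma> (complex_of_real v - \<sigma>)"
proof -
  let ?v = "complex_of_real v"
  let ?S = "UNIV - (\<int>\<^sub>\<le>\<^sub>0 \<union> {\<sigma>. ?v - \<sigma> \<in> \<int>\<^sub>\<le>\<^sub>0})"
  have "countable (\<int>\<^sub>\<le>\<^sub>0 \<union> {\<sigma>. ?v - \<sigma> \<in> \<int>\<^sub>\<le>\<^sub>0})" "closed (\<int>\<^sub>\<le>\<^sub>0 \<union> {\<sigma>. ?v - \<sigma> \<in> \<int>\<^sub>\<le>\<^sub>0})"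
    using countable_diff_nonpos_Ints(1)[of ?v] closed_diff_nonpos_Ints(1)[of ?v]
    by (auto simp: countable_nonpos_Ints)
  then have S: "open ?S" "connected ?S"
    using open_connected_diff_countable[OF open_UNIV connected_UNIV] by auto
  have "(\<lambda>\<sigma>. (\<Sum>n. beta_series_term ?v \<sigma> n) - Beta \<sigma> (?v - \<sigma>)) \<sigma> = 0"
  proof (rule analytic_continuation_real_interval[where f = "\<lambda>\<sigma>. (\<Sum>n. beta_series_term ?v \<sigma> n) - Beta \<sigma> (?v - \<sigma>)", OF _ S])
    show "(\<lambda>\<sigma>. (\<Sum>n. beta_series_term ?v \<sigma> n) - Beta \<sigma> (?v - \<sigma>)) holomorphic_on ?S"
      using assms(1,2) S(1) by (intro holomorphic_intros holomorphic_beta_series) auto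
    show "complex_of_real ` {0<..<v} \<subseteq> ?S"
    proof
      fix z assume "z \<in> complex_of_real ` {0<..<v}"
      then obtain t where t: "0 < t" "t < v" "z = complex_of_real t"
        by auto
      have "t \<notin> \<int>\<^sub>\<le>\<^sub>0" "v - t \<notin> \<int>\<^sub>\<le>\<^sub>0"
        using t nonpos_Ints_nonpos by force+
      then show "z \<in> ?S"
        using t by (simp add: of_real_in_nonpos_Ints_iff flip: of_real_diff)
    qed
    show "(\<Sum>n. beta_series_term ?v (complex_of_real t) n) - Beta (complex_of_real t) (?v - complex_of_real t) = 0"
      if "0 < t" "t < v" for t
    proof -
      have "(\<lambda>n. ((-(t + (v - t))) gchoose n) * (1 / (real n + t) + 1 / (real n + (v - t)))) sums Beta t (v - t)"
        using that assms(2) by (intro beta_series_real) auto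
      then have "beta_series_term (complex_of_real (t + (v - t))) (complex_of_real t) sums complex_of_real (Beta t (v - t))"
        unfolding beta_series_term_of_real by (simp only: sums_of_real_iff)
      then show ?thesis
        by (simp add: sums_unique[symmetric] Beta_complex_of_real flip: of_real_diff)
    qed
  qed (use assms in auto)
  then show ?thesis
    by simp
qed

lemma exists_real_interval_avoiding_nonpos_Ints:
  fixes \<sigma> :: complex
  obtains a b where "0 < a" "a < b" "b < 1" "\<And>t. a < t \<Longrightarrow> t < b \<Longrightarrow> complex_of_real t - \<sigma> \<notin> \<int>\<^sub>\<le>\<^sub>0"
proof (cases "\<forall>t. 1/8 < t \<and> t < 3/8 \<longrightarrow> complex_of_real t - \<sigma> \<notin> \<int>\<^sub>\<le>\<^sub>0")
  case True
  then show thesis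
    by (intro that[of "1/8" "3/8"]) auto
next
  case False
  then obtain t1 where t1: "1/8 < t1" "t1 < 3/8" "complex_of_real t1 - \<sigma> \<in> \<int>\<^sub>\<le>\<^sub>0"
    by auto
  have "complex_of_real t - \<sigma> \<notin> \<int>\<^sub>\<le>\<^sub>0" if t: "5/8 < t" "t < 7/8" for t
  proof
    assume "complex_of_real t - \<sigma> \<in> \<int>\<^sub>\<le>\<^sub>0"
    have "(complex_of_real t - \<sigma>) - (complex_of_real t1 - \<sigma>) \<in> \<int>"
      by (rule Ints_diff) (use \<open>complex_of_real t - \<sigma> \<in> \<int>\<^sub>\<le>\<^sub>0\<close> t1(3) nonpos_Ints_subset_Ints in blast)+
    then have "t - t1 \<in> \<int>"
      by (simp flip: of_real_diff add: of_real_in_Ints_iff)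
    then obtain k where k: "t - t1 = of_int k"
      by (auto elim: Ints_cases)
    have "0 < t - t1" "t - t1 < 1"
      using t t1 by auto
    then have "0 < k" "k < 1"
      unfolding k by simp_all
    then show False
      by simp
  qed
  then show thesis
    by (intro that[of "5/8" "7/8"]) auto
qed

lemma beta_series_sums:
  assumes "Re v < 2" "\<sigma> \<notin> \<int>\<^sub>\<le>\<^sub>0" "v - \<sigma> \<notin> \<int>\<^sub>\<le>\<^sub>0"
  shows "beta_series_term v \<sigma> sums Beta \<sigma> (v - \<sigma>)"
proof -
  let ?D = "{z. Re z < 2} - {z. z - \<sigma> \<in> \<int>\<^sub>\<le>\<^sub>0}"
  have D: "open ?D" "connected ?D"
    using countable_diff_nonpos_Ints(2)[of \<sigma>] closed_diff_nonpos_Ints(2)[of \<sigma>]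
    by (auto intro!: open_connected_diff_countable open_halfspace_Re_lt)
  obtain a b where ab: "0 < a" "a < b" "b < 1"
    and avoid: "\<And>t. a < t \<Longrightarrow> t < b \<Longrightarrow> complex_of_real t - \<sigma> \<notin> \<int>\<^sub>\<le>\<^sub>0"
    using exists_real_interval_avoiding_nonpos_Ints[of \<sigma>] by blast
  have "(\<lambda>z. (\<Sum>n. beta_series_term z \<sigma> n) - Beta \<sigma> (z - \<sigma>)) v = 0"
  proof (rule analytic_continuation_real_interval[where f = "\<lambda>z. (\<Sum>n. beta_series_term z \<sigma> n) - Beta \<sigma> (z - \<sigma>)",
        OF _ D ab(2)])
    show "(\<lambda>z. (\<Sum>n. beta_series_term z \<sigma> n) - Beta \<sigma> (z - \<sigma>)) holomorphic_on ?D"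
      using D(1) assms(2) by (intro holomorphic_intros holomorphic_beta_series[where S = "\<lambda>_. \<sigma>"]) auto
    show "complex_of_real ` {a<..<b} \<subseteq> ?D"
      using ab avoid by auto
    show "(\<Sum>n. beta_series_term (complex_of_real t) \<sigma> n) - Beta \<sigma> (complex_of_real t - \<sigma>) = 0"
      if "a < t" "t < b" for t
      using that ab avoid assms(2) by (simp add: beta_series_eq_Beta_of_real)
  qed (use assms in auto)
  moreover have "(\<lambda>N. \<Sum>n<N. beta_series_term v \<sigma> n) \<longlonglongrightarrow> (\<Sum>n. beta_series_term v \<sigma> n)"
    using assms(1) by (intro tendsto_uniform_limitI[OF uniform_limit_beta_series[of "norm v + norm \<sigma>" "Re v" "{v}"]]) auto
  ultimately show ?thesis
    by (simp add: sums_def)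
qed

section \<open>The very-well-poised 8F7\<close>

lemma pochhammer_1_plus:
  fixes w :: "'a::comm_semiring_1"
  shows "w * pochhammer (1 + w) n = pochhammer w n * (w + of_nat n)"
  by (metis pochhammer_rec pochhammer_Suc add.commute)

lemma pochhammer_1_plus_div:
  fixes w :: complex
  assumes "w \<notin> \<int>\<^sub>\<le>\<^sub>0"
  shows "pochhammer (1 + w) n / pochhammer w n = (w + of_nat n) / w"
proof -
  have "pochhammer w n \<noteq> 0" "w \<noteq> 0"
    using assms by (auto simp: pochhammer_eq_0_iff)
  then show ?thesis
    using pochhammer_1_plus[of w n] by (simp add: field_simps)
qed

lemma pochhammer_div_1_plus:
  fixes w :: complex
  assumes "w \<notin> \<int>\<^sub>\<le>\<^sub>0"
  shows "pochhammer w n / pochhammer (1 + w) n = w / (w + of_nat n)"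
proof -
  have "1 + w \<notin> \<int>\<^sub>\<le>\<^sub>0"
    using assms nonpos_Ints_diff_Nats[of "1 + w" 1] by auto
  then have "pochhammer (1 + w) n \<noteq> 0" "w + of_nat n \<noteq> 0"
    using assms plus_of_nat_eq_0_imp by (auto simp: pochhammer_eq_0_iff)
  then show ?thesis
    using pochhammer_1_plus[of w n] by (simp add: field_simps)
qed

lemma nonpos_Ints_1_plus: "(z::complex) \<in> \<int>\<^sub>\<le>\<^sub>0 \<Longrightarrow> z \<noteq> 0 \<Longrightarrow> 1 + z \<in> \<int>\<^sub>\<le>\<^sub>0"
  by (auto elim!: nonpos_Ints_cases intro!: nonpos_Ints_of_int[of "1 + _", simplified])

lemma partial_fractions_plus_minus:
  fixes X A B :: complex
  assumes "X - A \<noteq> 0" "X + A \<noteq> 0" "X - B \<noteq> 0" "X + B \<noteq> 0"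
  shows "X * (2 * X^2 - A^2 - B^2) / ((X - A) * (X + A) * (X - B) * (X + B))
       = (1 / (X - A) + 1 / (X + A) + 1 / (X - B) + 1 / (X + B)) / 2"
proof -
  define D where "D = (X - A) * (X + A) * (X - B) * (X + B)"
  have D: "D \<noteq> 0"
    using assms by (simp add: D_def)
  have "1 / (X - A) = ((X + A) * (X - B) * (X + B)) / D" "1 / (X + A) = ((X - A) * (X - B) * (X + B)) / D"
    "1 / (X - B) = ((X - A) * (X + A) * (X + B)) / D" "1 / (X + B) = ((X - A) * (X + A) * (X - B)) / D"
    using assms D by (simp_all add: D_def field_simps)
  then have "1 / (X - A) + 1 / (X + A) + 1 / (X - B) + 1 / (X + B)
      = ((X + A) * (X - B) * (X + B) + (X - A) * (X - B) * (X + B)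
         + (X - A) * (X + A) * (X + B) + (X - A) * (X + A) * (X - B)) / D"
    by (simp add: add_divide_distrib)
  also have "\<dots> = 2 * (X * (2 * X^2 - A^2 - B^2)) / D"
    by (simp add: algebra_simps power2_eq_square)
  finally show ?thesis
    by (simp add: D_def)
qed

text \<open>With \<open>X = n + v/2\<close>, the pairs \<open>n + s3, n + s5\<close> and \<open>n + s4, n + s6\<close> are \<open>X \<mp> A\<close> and
  \<open>X \<mp> B\<close>, while \<open>(n + l1) (n + l2) = X\<^sup>2 - (A\<^sup>2 + B\<^sup>2)/2\<close>; so the very-well-poised factor
  becomes the partial fraction above.\<close>

lemma very_well_poised_factor:
  fixes v l1 l2 s3 s4 s5 s6 :: complex and n :: nat
  assumes sums: "s3 + s5 = v" "s4 + s6 = v" "l1 + l2 = v"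
    and prod: "4 * (l1 * l2) = v^2 - ((s5 - s3)^2 + (s6 - s4)^2) / 2"
    and nz: "of_nat n + s3 \<noteq> 0" "of_nat n + s5 \<noteq> 0" "of_nat n + s4 \<noteq> 0" "of_nat n + s6 \<noteq> 0"
  shows "(v/2 + of_nat n) / (v/2) * ((l1 + of_nat n) / l1) * ((l2 + of_nat n) / l2)
          * (s3 / (s3 + of_nat n)) * (s4 / (s4 + of_nat n)) * (s5 / (s5 + of_nat n)) * (s6 / (s6 + of_nat n))
       = s3 * s4 * s5 * s6 / (v * (l1 * l2)) / 2
          * (1 / (of_nat n + s3) + 1 / (of_nat n + s5) + 1 / (of_nat n + s4) + 1 / (of_nat n + s6))"
proof -
  define X where "X = of_nat n + v/2"
  define A where "A = (s5 - s3) / 2"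
  define B where "B = (s6 - s4) / 2"
  have "of_nat n + s3 = X - A" "of_nat n + s5 = X + A"
    using sums(1)[symmetric] unfolding X_def A_def by (simp_all add: field_simps)
  moreover have "of_nat n + s4 = X - B" "of_nat n + s6 = X + B"
    using sums(2)[symmetric] unfolding X_def B_def by (simp_all add: field_simps)
  ultimately have shifts: "of_nat n + s3 = X - A" "of_nat n + s5 = X + A" "of_nat n + s4 = X - B" "of_nat n + s6 = X + B"
    by auto
  have l12: "l1 * l2 = (v^2 - ((s5 - s3)^2 + (s6 - s4)^2) / 2) / 4"
    using prod by (simp add: mult.commute)
  have "2 * ((l1 + of_nat n) * (l2 + of_nat n)) = 2 * (of_nat n ^ 2 + of_nat n * (l1 + l2) + l1 * l2)"
    by (simp add: algebra_simps power2_eq_square)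
  also have "\<dots> = 2 * X^2 - A^2 - B^2"
    unfolding sums(3) l12 X_def A_def B_def by (simp add: field_simps power2_eq_square)
  finally have lambdas: "2 * ((l1 + of_nat n) * (l2 + of_nat n)) = 2 * X^2 - A^2 - B^2" .
  have "(v/2 + of_nat n) / (v/2) * ((l1 + of_nat n) / l1) * ((l2 + of_nat n) / l2)
        * (s3 / (s3 + of_nat n)) * (s4 / (s4 + of_nat n)) * (s5 / (s5 + of_nat n)) * (s6 / (s6 + of_nat n))
      = X / (v/2) * ((l1 + of_nat n) / l1) * ((l2 + of_nat n) / l2)
        * (s3 / (X - A)) * (s4 / (X - B)) * (s5 / (X + A)) * (s6 / (X + B))"
    unfolding shifts[symmetric] by (simp add: X_def add.commute)
  also have "\<dots> = s3 * s4 * s5 * s6 / (v * (l1 * l2))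
      * (X * (2 * ((l1 + of_nat n) * (l2 + of_nat n))) / ((X - A) * (X + A) * (X - B) * (X + B)))"
    by (simp add: times_divide_times_eq divide_divide_eq_left divide_divide_eq_right mult_ac)
  also have "\<dots> = s3 * s4 * s5 * s6 / (v * (l1 * l2)) / 2
      * (1 / (X - A) + 1 / (X + A) + 1 / (X - B) + 1 / (X + B))"
    unfolding lambdas partial_fractions_plus_minus[OF nz[unfolded shifts]] by simp
  finally show ?thesis
    unfolding shifts .
qed

lemma hyper_term_very_well_poised:
  fixes v l1 l2 s3 s4 s5 s6 :: complex
  assumes sums: "s3 + s5 = v" "s4 + s6 = v" "l1 + l2 = v"
    and prod: "4 * (l1 * l2) = v^2 - ((s5 - s3)^2 + (s6 - s4)^2) / 2"
    and npi: "v/2 \<notin> \<int>\<^sub>\<le>\<^sub>0" "l1 \<notin> \<int>\<^sub>\<le>\<^sub>0" "l2 \<notin> \<int>\<^sub>\<le>\<^sub>0"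
      "s3 \<notin> \<int>\<^sub>\<le>\<^sub>0" "s4 \<notin> \<int>\<^sub>\<le>\<^sub>0" "s5 \<notin> \<int>\<^sub>\<le>\<^sub>0" "s6 \<notin> \<int>\<^sub>\<le>\<^sub>0"
  shows "hyper_term [v, 1 + v/2, 1 + l1, 1 + l2, s3, s4, s5, s6]
           [v/2, l1, l2, 1 + s3, 1 + s4, 1 + s5, 1 + s6] (-1) n
       = s3 * s4 * s5 * s6 / (v * (l1 * l2)) / 2 * (beta_series_term v s3 n + beta_series_term v s4 n)"
proof -
  have nz: "of_nat n + s3 \<noteq> 0" "of_nat n + s5 \<noteq> 0" "of_nat n + s4 \<noteq> 0" "of_nat n + s6 \<noteq> 0"
    using npi(4-7) plus_of_nat_eq_0_imp by (metis add.commute)+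
  have vs: "v - s3 = s5" "v - s4 = s6"
    using sums(1,2) by (simp_all add: algebra_simps)
  have "hyper_term [v, 1 + v/2, 1 + l1, 1 + l2, s3, s4, s5, s6]
           [v/2, l1, l2, 1 + s3, 1 + s4, 1 + s5, 1 + s6] (-1) n
      = ((-v) gchoose n) * (pochhammer (1 + v/2) n / pochhammer (v/2) n
          * (pochhammer (1 + l1) n / pochhammer l1 n) * (pochhammer (1 + l2) n / pochhammer l2 n)
          * (pochhammer s3 n / pochhammer (1 + s3) n) * (pochhammer s4 n / pochhammer (1 + s4) n)
          * (pochhammer s5 n / pochhammer (1 + s5) n) * (pochhammer s6 n / pochhammer (1 + s6) n))"
    unfolding hyper_term_def gbinomial_pochhammer by (simp add: times_divide_times_eq divide_divide_eq_left mult_ac)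
  also have "\<dots> = ((-v) gchoose n) * ((v/2 + of_nat n) / (v/2) * ((l1 + of_nat n) / l1) * ((l2 + of_nat n) / l2)
      * (s3 / (s3 + of_nat n)) * (s4 / (s4 + of_nat n)) * (s5 / (s5 + of_nat n)) * (s6 / (s6 + of_nat n)))"
    using npi by (simp add: pochhammer_1_plus_div pochhammer_div_1_plus)
  also have "\<dots> = ((-v) gchoose n) * (s3 * s4 * s5 * s6 / (v * (l1 * l2)) / 2
      * (1 / (of_nat n + s3) + 1 / (of_nat n + s5) + 1 / (of_nat n + s4) + 1 / (of_nat n + s6)))"
    unfolding very_well_poised_factor[OF sums prod nz] ..
  also have "\<dots> = s3 * s4 * s5 * s6 / (v * (l1 * l2)) / 2 * (beta_series_term v s3 n + beta_series_term v s4 n)"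
  proof -
    have ring: "g * (K * (a + b + c + d)) = K * (g * (a + b) + g * (c + d))" for g K a b c d :: complex
      by (simp add: algebra_simps)
    show ?thesis
      unfolding beta_series_term_def vs by (rule ring)
  qed
  finally show ?thesis .
qed

lemma hypergeometric_very_well_poised:
  fixes v l1 l2 s3 s4 s5 s6 :: complex
  assumes "Re v < 2"
    and sums: "s3 + s5 = v" "s4 + s6 = v" "l1 + l2 = v"
    and prod: "4 * (l1 * l2) = v^2 - ((s5 - s3)^2 + (s6 - s4)^2) / 2"
    and npi: "v/2 \<notin> \<int>\<^sub>\<le>\<^sub>0" "l1 \<notin> \<int>\<^sub>\<le>\<^sub>0" "l2 \<notin> \<int>\<^sub>\<le>\<^sub>0"
      "s3 \<notin> \<int>\<^sub>\<le>\<^sub>0" "s4 \<notin> \<int>\<^sub>\<le>\<^sub>0" "s5 \<notin> \<int>\<^sub>\<le>\<^sub>0" "s6 \<notin> \<int>\<^sub>\<le>\<^sub>0"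
  shows "hypergeometric [v, 1 + v/2, 1 + l1, 1 + l2, s3, s4, s5, s6]
           [v/2, l1, l2, 1 + s3, 1 + s4, 1 + s5, 1 + s6] (-1)
       = s3 * s4 * s5 * s6 / (v * (l1 * l2)) / 2 * (Beta s3 s5 + Beta s4 s6)"
proof -
  have vs: "v - s3 = s5" "v - s4 = s6"
    using sums(1,2) by (simp_all add: algebra_simps)
  have "beta_series_term v s3 sums Beta s3 s5" "beta_series_term v s4 sums Beta s4 s6"
    using beta_series_sums[OF assms(1)] npi vs by force+
  then have "(\<lambda>n. s3 * s4 * s5 * s6 / (v * (l1 * l2)) / 2 * (beta_series_term v s3 n + beta_series_term v s4 n))
      sums (s3 * s4 * s5 * s6 / (v * (l1 * l2)) / 2 * (Beta s3 s5 + Beta s4 s6))"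
    by (intro sums_mult sums_add)
  then show ?thesis
    unfolding hypergeometric_def hyper_term_very_well_poised[OF sums prod npi] by (rule sums_unique[symmetric])
qed

lemma very_well_poised_parameter_identities:
  fixes v a b c s :: complex
  assumes "c \<noteq> 0" "s^2 = a^2 + b^2"
  defines "l1 \<equiv> v/2 - s/(2*c)" and "l2 \<equiv> v/2 + s/(2*c)"
    and "s3 \<equiv> v/2 - a/(2*c) - b/(2*c)" and "s4 \<equiv> v/2 - a/(2*c) + b/(2*c)"
    and "s5 \<equiv> v/2 + a/(2*c) + b/(2*c)" and "s6 \<equiv> v/2 + a/(2*c) - b/(2*c)"
  shows "s3 + s5 = v" "s4 + s6 = v" "l1 + l2 = v"
    and "4 * (l1 * l2) = v^2 - ((s5 - s3)^2 + (s6 - s4)^2) / 2"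
    and "s3 * s4 * s5 * s6 / (v * (l1 * l2)) / 2 = (v * c - a - b) * (v * c + a + b) * (v * c - a + b) * (v * c + a - b)
           / (8 * (v^3 * c^4 - a^2 * v * c^2 - b^2 * v * c^2))"
    and "2 * c * s3 = v * c - a - b" "2 * c * s4 = v * c - a + b"
      "2 * c * s5 = v * c + a + b" "2 * c * s6 = v * c + a - b"
proof -
  show "s3 + s5 = v" "s4 + s6 = v" "l1 + l2 = v"
    by (simp_all add: s3_def s4_def s5_def s6_def l1_def l2_def)
  have l12: "l1 * l2 = (v^2 * c^2 - s^2) / (4 * c^2)"
    using assms(1) by (simp add: l1_def l2_def field_simps power2_eq_square)
  show "4 * (l1 * l2) = v^2 - ((s5 - s3)^2 + (s6 - s4)^2) / 2"
    unfolding l12 using assms by (simp add: s3_def s4_def s5_def s6_def field_simps power2_eq_square)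
  have P: "(v * c - a - b) * (v * c + a + b) * (v * c - a + b) * (v * c + a - b) = 16 * c^4 * (s3 * s4 * s5 * s6)"
    using assms(1) by (simp add: s3_def s4_def s5_def s6_def field_simps) (simp add: algebra_simps eval_nat_numeral)
  have D: "v^3 * c^4 - a^2 * v * c^2 - b^2 * v * c^2 = 4 * c^4 * (v * (l1 * l2))"
    unfolding l12 using assms by (simp add: field_simps power2_eq_square eval_nat_numeral)
  show "s3 * s4 * s5 * s6 / (v * (l1 * l2)) / 2 = (v * c - a - b) * (v * c + a + b) * (v * c - a + b) * (v * c + a - b)
      / (8 * (v^3 * c^4 - a^2 * v * c^2 - b^2 * v * c^2))"
    unfolding P D using assms(1) by (cases "v * (l1 * l2) = 0") (simp_all add: field_simps)
  show "2 * c * s3 = v * c - a - b" "2 * c * s4 = v * c - a + b"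
      "2 * c * s5 = v * c + a + b" "2 * c * s6 = v * c + a - b"
    using assms(1) by (simp_all add: s3_def s4_def s5_def s6_def field_simps)
qed

theorem mainTheorem7:
  fixes v a b c s :: complex
  assumes "Re v < 2" and "Re c > 0"
    and "Re (v * c + a + b) > 0" and "Re (v * c + a - b) > 0"
    and "Re (v * c - a + b) > 0" and "Re (v * c - a - b) > 0"
    and "s ^ 2 = a ^ 2 + b ^ 2"
    and "v / 2 \<notin> \<int>\<^sub>\<le>\<^sub>0"
    and "v / 2 - s / (2*c) \<notin> \<int>\<^sub>\<le>\<^sub>0"
    and "v / 2 + s / (2*c) \<notin> \<int>\<^sub>\<le>\<^sub>0"
    and "1 + (v/2 - a/(2*c) - b/(2*c)) \<notin> \<int>\<^sub>\<le>\<^sub>0"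
    and "1 + (v/2 - a/(2*c) + b/(2*c)) \<notin> \<int>\<^sub>\<le>\<^sub>0"
    and "1 + (v/2 + a/(2*c) + b/(2*c)) \<notin> \<int>\<^sub>\<le>\<^sub>0"
    and "1 + (v/2 + a/(2*c) - b/(2*c)) \<notin> \<int>\<^sub>\<le>\<^sub>0"
  shows
    "let l1 = v/2 - s/(2*c); l2 = v/2 + s/(2*c);
         s3 = v/2 - a/(2*c) - b/(2*c); s4 = v/2 - a/(2*c) + b/(2*c);
         s5 = v/2 + a/(2*c) + b/(2*c); s6 = v/2 + a/(2*c) - b/(2*c);
         P = (v * c - a - b) * (v * c + a + b) * (v * c - a + b) * (v * c + a - b)
     in hypergeometric [v, 1 + v/2, 1 + l1, 1 + l2, s3, s4, s5, s6]
                       [v/2, l1, l2, 1 + s3, 1 + s4, 1 + s5, 1 + s6] (-1)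
        = P / (8 * (v^3 * c^4 - a^2 * v * c^2 - b^2 * v * c^2) * Gamma v)
            * (Gamma s5 * Gamma s3 + Gamma s6 * Gamma s4)"
proof -
  define l1 where "l1 = v/2 - s/(2*c)"
  define l2 where "l2 = v/2 + s/(2*c)"
  define s3 where "s3 = v/2 - a/(2*c) - b/(2*c)"
  define s4 where "s4 = v/2 - a/(2*c) + b/(2*c)"
  define s5 where "s5 = v/2 + a/(2*c) + b/(2*c)"
  define s6 where "s6 = v/2 + a/(2*c) - b/(2*c)"
  define P where "P = (v * c - a - b) * (v * c + a + b) * (v * c - a + b) * (v * c + a - b)"
  have c: "c \<noteq> 0"
    using assms(2) by auto
  note ids = very_well_poised_parameter_identities[OF c assms(7), of v,
      folded l1_def l2_def s3_def s4_def s5_def s6_def P_def]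
  have "s3 \<noteq> 0" "s4 \<noteq> 0" "s5 \<noteq> 0" "s6 \<noteq> 0"
    using ids(6-9) assms(3-6) by (metis mult_zero_right less_irrefl zero_complex.sel(1))+
  then have npi: "s3 \<notin> \<int>\<^sub>\<le>\<^sub>0" "s4 \<notin> \<int>\<^sub>\<le>\<^sub>0" "s5 \<notin> \<int>\<^sub>\<le>\<^sub>0" "s6 \<notin> \<int>\<^sub>\<le>\<^sub>0"
    using assms(11-14) nonpos_Ints_1_plus unfolding s3_def s4_def s5_def s6_def by blast+
  have "hypergeometric [v, 1 + v/2, 1 + l1, 1 + l2, s3, s4, s5, s6]
           [v/2, l1, l2, 1 + s3, 1 + s4, 1 + s5, 1 + s6] (-1)
      = s3 * s4 * s5 * s6 / (v * (l1 * l2)) / 2 * (Beta s3 s5 + Beta s4 s6)"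
    using assms(1,8-10) ids(1-4) npi unfolding l1_def l2_def by (intro hypergeometric_very_well_poised) auto
  also have "Beta s3 s5 + Beta s4 s6 = (Gamma s5 * Gamma s3 + Gamma s6 * Gamma s4) / Gamma v"
    unfolding Beta_def ids(1,2) by (simp add: add_divide_distrib mult.commute)
  also have "s3 * s4 * s5 * s6 / (v * (l1 * l2)) / 2 * ((Gamma s5 * Gamma s3 + Gamma s6 * Gamma s4) / Gamma v)
      = P / (8 * (v^3 * c^4 - a^2 * v * c^2 - b^2 * v * c^2) * Gamma v) * (Gamma s5 * Gamma s3 + Gamma s6 * Gamma s4)"
    unfolding ids(5) P_def by simp
  finally show ?thesis
    unfolding Let_def l1_def l2_def s3_def s4_def s5_def s6_def P_def .
qed

end
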